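(* Let $(Q,T)$ be the outcome of any equilibrium (under a bailout at price $p_g$) of the two-period model. Then the welfare of this equilibrium equals $$\int_0^1\Big\{2\theta+S\,Q(\theta)-\lambda\Big[\Big(\frac{F(\theta)}{f(\theta)}-S\Big)Q(\theta)+\bar u-2\Big]\Big\}f(\theta)\,d\theta,$$ where $\bar u\ge 2$ is the equilibrium total payoff of the highest type $\theta=1$.
   Context: Two-period model: a continuum of firms with privately known type $\theta\in[0,1]$, cdf $F$, density $f>0$, $f$ strictly log-concave. A type-$\theta$ firm holds one unit of an asset worth $\theta$ in each of two periods $t=1,2$. In each period it has a project with cost $I>0$ and net return $S>0$ that can be funded only by selling that period's unit; selling that unit at price $p\ge I$ yields $p+S$ for that period, not selling yields $\theta$. A firm's total payoff is the (undiscounted) sum of the two periods' payoffs. In each period competitive risk-neutral buyers make price offers and break even in expectation. At $t=1$ only, the government offers to buy one unit at price $p_g$. Equilibrium means perfect Bayesian equilibrium. Outcome: an equilibrium induces $(Q,T):[0,1]\to\{0,1,2\}\times\mathbb{R}$, where $Q(\theta)$ is the total number of units a type-$\theta$ firm sells over the two periods and $T(\theta)$ is the total payment it receives (from the government and from market buyers). The type-$\theta$ payoff is $u(\theta)=T(\theta)+\theta(2-Q(\theta))+SQ(\theta)$; it is incentive compatible in the sense that $u(\theta)\ge T(\tilde\theta)+\theta(2-Q(\tilde\theta))+SQ(\tilde\theta)$ for all $\tilde\theta,\theta$, and $u(\theta)\ge 2\theta$. Welfare: raising one dollar of public funds costs $1+\lambda$, $\lambda\ge0$. With $\Theta_g$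 the set of types accepting the government offer, welfare is $\int_0^1[u(\theta)+\theta Q(\theta)-T(\theta)]f(\theta)d\theta-\lambda\int_{\Theta_g}(p_g-\theta)f(\theta)d\theta$. *)

theory Defs
  imports "HOL-Analysis.Analysis"
begin

definition strictly_log_concave_on :: "real set \<Rightarrow> (real \<Rightarrow> real) \<Rightarrow> bool" where
  "strictly_log_concave_on A f \<longleftrightarrow>
     (\<forall>x\<in>A. \<forall>y\<in>A. x \<noteq> y \<longrightarrow> (\<forall>t::real. 0 < t \<and> t < 1 \<longrightarrow>
        t * ln (f x) + (1 - t) * ln (f y) < ln (f (t * x + (1 - t) * y))))"

definition type_distribution :: "(real \<Rightarrow> real) \<Rightarrow> (real \<Rightarrow> real) \<Rightarrow> bool" where
  "type_distribution F f \<longleftrightarrow>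
     set_integrable lborel {0..1} f \<and>
     (\<forall>\<theta>\<in>{0..1}. f \<theta> > 0) \<and>
     (\<forall>\<theta>\<in>{0..1}. F \<theta> = set_lebesgue_integral lborel {0..\<theta>} f) \<and>
     F 1 = 1 \<and>
     strictly_log_concave_on {0..1} f"

datatype act1 = NoSale | SellGov | SellMkt

definition price1 :: "real \<Rightarrow> real \<Rightarrow> act1 \<Rightarrow> real" where
  "price1 pg p1 a = (case a of NoSale \<Rightarrow> 0 | SellGov \<Rightarrow> pg | SellMkt \<Rightarrow> p1)"

definition pay1 :: "real \<Rightarrow> real \<Rightarrow> real \<Rightarrow> real \<Rightarrow> act1 \<Rightarrow> real" where
  "pay1 S pg p1 \<theta> a = (if a = NoSale then \<theta> else price1 pg p1 a + S)"

definition pay2 :: "real \<Rightarrow> (act1 \<Rightarrow> real) \<Rightarrow> real \<Rightarrow> act1 \<Rightarrow> bool \<Rightarrow> real" where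
  "pay2 S p2 \<theta> h b = (if b then p2 h + S else \<theta>)"

text \<open>A sale can fund the project only at a price of at least I; such sales are the
only feasible ones.\<close>
definition feasible1 :: "real \<Rightarrow> real \<Rightarrow> real \<Rightarrow> act1 \<Rightarrow> bool" where
  "feasible1 I pg p1 a \<longleftrightarrow> (a = SellGov \<longrightarrow> pg \<ge> I) \<and> (a = SellMkt \<longrightarrow> p1 \<ge> I)"

definition feasible2 :: "real \<Rightarrow> (act1 \<Rightarrow> real) \<Rightarrow> act1 \<Rightarrow> bool \<Rightarrow> bool" where
  "feasible2 I p2 h b \<longleftrightarrow> (b \<longrightarrow> p2 h \<ge> I)"

text \<open>Equilibrium (perfect Bayesian, pure firm strategies):
  p1 = period-1 market price, p2 h = period-2 market price after public period-1 history h,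
  a1 theta = period-1 action of type theta, s2 theta h = period-2 sale decision after h.
  Firms are sequentially rational; competitive buyers break even in expectation
  in each period and after each history (Bayes' rule on the types trading there).\<close>
definition equilibrium ::
  "real \<Rightarrow> real \<Rightarrow> real \<Rightarrow> (real \<Rightarrow> real) \<Rightarrow>
   real \<Rightarrow> (act1 \<Rightarrow> real) \<Rightarrow> (real \<Rightarrow> act1) \<Rightarrow> (real \<Rightarrow> act1 \<Rightarrow> bool) \<Rightarrow> bool" where
  "equilibrium I S pg f p1 p2 a1 s2 \<longleftrightarrow>
     \<comment> \<open>measurable strategies\<close>
     (\<forall>h. {\<theta>. a1 \<theta> = h} \<in> sets borel \<and> {\<theta>. s2 \<theta> h} \<in> sets borel) \<and>
     \<comment> \<open>feasibility\<close>
     (\<forall>\<theta>\<in>{0..1}. feasible1 I pg p1 (a1 \<theta>) \<and> (\<forall>h. feasible2 I p2 h (s2 \<theta> h))) \<and>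
     \<comment> \<open>sequential rationality in period 2, after every history\<close>
     (\<forall>\<theta>\<in>{0..1}. \<forall>h b. feasible2 I p2 h b \<longrightarrow>
        pay2 S p2 \<theta> h b \<le> pay2 S p2 \<theta> h (s2 \<theta> h)) \<and>
     \<comment> \<open>optimality in period 1 given continuation play\<close>
     (\<forall>\<theta>\<in>{0..1}. \<forall>a. feasible1 I pg p1 a \<longrightarrow>
        pay1 S pg p1 \<theta> a + pay2 S p2 \<theta> a (s2 \<theta> a)
          \<le> pay1 S pg p1 \<theta> (a1 \<theta>) + pay2 S p2 \<theta> (a1 \<theta>) (s2 \<theta> (a1 \<theta>))) \<and>
     \<comment> \<open>period-1 market buyers break even in expectation\<close>
     set_lebesgue_integral lborel {\<theta>\<in>{0..1}. a1 \<theta> = SellMkt} (\<lambda>\<theta>. (\<theta> - p1) * f \<theta>) = 0 \<and>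
     \<comment> \<open>period-2 market buyers break even in expectation after every history\<close>
     (\<forall>h. set_lebesgue_integral lborel {\<theta>\<in>{0..1}. a1 \<theta> = h \<and> s2 \<theta> h}
            (\<lambda>\<theta>. (\<theta> - p2 h) * f \<theta>) = 0)"

definition outcome_Q :: "(real \<Rightarrow> act1) \<Rightarrow> (real \<Rightarrow> act1 \<Rightarrow> bool) \<Rightarrow> real \<Rightarrow> nat" where
  "outcome_Q a1 s2 \<theta> = (if a1 \<theta> = NoSale then 0 else 1) + (if s2 \<theta> (a1 \<theta>) then 1 else 0)"

definition outcome_T ::
  "real \<Rightarrow> real \<Rightarrow> (act1 \<Rightarrow> real) \<Rightarrow> (real \<Rightarrow> act1) \<Rightarrow> (real \<Rightarrow> act1 \<Rightarrow> bool) \<Rightarrow> real \<Rightarrow> real" where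
  "outcome_T pg p1 p2 a1 s2 \<theta> =
     price1 pg p1 (a1 \<theta>) + (if s2 \<theta> (a1 \<theta>) then p2 (a1 \<theta>) else 0)"

definition gov_set :: "(real \<Rightarrow> act1) \<Rightarrow> real set" where
  "gov_set a1 = {\<theta>\<in>{0..1}. a1 \<theta> = SellGov}"

definition payoff :: "real \<Rightarrow> (real \<Rightarrow> nat) \<Rightarrow> (real \<Rightarrow> real) \<Rightarrow> real \<Rightarrow> real" where
  "payoff S Q T \<theta> = T \<theta> + \<theta> * (2 - real (Q \<theta>)) + S * real (Q \<theta>)"

definition welfare ::
  "real \<Rightarrow> real \<Rightarrow> real \<Rightarrow> (real \<Rightarrow> real) \<Rightarrow> (real \<Rightarrow> nat) \<Rightarrow> (real \<Rightarrow> real) \<Rightarrow> real set \<Rightarrow> real" where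
  "welfare lam S pg f Q T \<Theta>g =
     set_lebesgue_integral lborel {0..1}
       (\<lambda>\<theta>. (payoff S Q T \<theta> + \<theta> * real (Q \<theta>) - T \<theta>) * f \<theta>)
     - lam * set_lebesgue_integral lborel \<Theta>g (\<lambda>\<theta>. (pg - \<theta>) * f \<theta>)"

end

theory Submission
  imports Defs
begin

text \<open>
  Incentive compatibility says that at every type x the equilibrium payoff u has a supporting
  line of slope 2 - Q x, the number of units type x keeps: type y can mimic x, collecting the same
  payments while its kept units are worth y instead of x.  Hence 2 - Q is monotone and
  u \<theta> = ubar - (integral of 2 - Q over [\<theta>, 1]) (envelope theorem).  Integrating against f and
  exchanging the order of integration gives E u = ubar - (integral of (2 - Q) F over [0, 1]),
  and likewise E \<theta> = 1 - (integral of F).  Since market buyers break even, the government's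
  expected loss is E (u - 2 \<theta> - S Q), which these identities turn into
  E ((F / f - S) Q + ubar - 2).
\<close>

lemma set_integrable_mult_bounded:
  fixes g h :: "'a \<Rightarrow> real"
  assumes h: "set_integrable M A h" and g: "set_borel_measurable M A g"
    and B: "\<And>x. x \<in> A \<Longrightarrow> \<bar>g x\<bar> \<le> B"
  shows "set_integrable M A (\<lambda>x. g x * h x)"
proof (rule set_integrable_bound)
  show "set_integrable M A (\<lambda>x. B * h x)" using h by simp
  have "(\<lambda>x. indicator A x *\<^sub>R h x) \<in> borel_measurable M"
    using h unfolding set_integrable_def by (rule borel_measurable_integrable)
  with g have "(\<lambda>x. (indicator A x *\<^sub>R g x) * (indicator A x *\<^sub>R h x)) \<in> borel_measurable M"
    unfolding set_borel_measurable_def by (rule borel_measurable_times)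
  moreover have "(\<lambda>x. (indicator A x *\<^sub>R g x) * (indicator A x *\<^sub>R h x))
      = (\<lambda>x. indicator A x *\<^sub>R (g x * h x))"
    by (auto simp: indicator_def fun_eq_iff)
  ultimately show "set_borel_measurable M A (\<lambda>x. g x * h x)"
    unfolding set_borel_measurable_def by simp
  show "AE x in M. x \<in> A \<longrightarrow> norm (g x * h x) \<le> norm (B * h x)"
  proof (rule AE_I2, rule impI)
    fix x assume "x \<in> A"
    then have "\<bar>g x\<bar> \<le> \<bar>B\<bar>" using B by fastforce
    then show "norm (g x * h x) \<le> norm (B * h x)" by (simp add: abs_mult mult_right_mono)
  qed
qed

lemma set_integrable_bounded_Icc:
  fixes g :: "real \<Rightarrow> real"
  assumes g: "g \<in> borel_measurable borel" and B: "\<And>x. x \<in> {a..b} \<Longrightarrow> \<bar>g x\<bar> \<le> B"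
  shows "set_integrable lborel {a..b} g"
proof -
  have "set_integrable lborel {a..b} (\<lambda>x. g x * 1)"
  proof (rule set_integrable_mult_bounded[OF _ _ B])
    show "set_integrable lborel {a..b} (\<lambda>_. 1 :: real)"
      by (simp add: set_integrable_def integrable_indicator_iff emeasure_lborel_Icc_eq)
    show "set_borel_measurable lborel {a..b} g"
      using g by (simp add: set_borel_measurable_def)
  qed
  then show ?thesis by simp
qed

definition subgradients_on :: "real set \<Rightarrow> (real \<Rightarrow> real) \<Rightarrow> (real \<Rightarrow> real) \<Rightarrow> bool" where
  "subgradients_on A u k \<longleftrightarrow> (\<forall>x\<in>A. \<forall>y\<in>A. u x + k x * (y - x) \<le> u y)"

lemma subgradients_onI:
  "(\<And>x y. x \<in> A \<Longrightarrow> y \<in> A \<Longrightarrow> u x + k x * (y - x) \<le> u y) \<Longrightarrow> subgradients_on A u k"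
  by (simp add: subgradients_on_def)

lemma subgradients_onD:
  "subgradients_on A u k \<Longrightarrow> x \<in> A \<Longrightarrow> y \<in> A \<Longrightarrow> u x + k x * (y - x) \<le> u y"
  by (simp add: subgradients_on_def)

lemma subgradient_mono_on:
  fixes u k :: "real \<Rightarrow> real"
  assumes sub: "subgradients_on A u k"
  shows "mono_on A k"
proof (rule mono_onI, rule ccontr)
  fix x y assume xy: "x \<in> A" "y \<in> A" "x \<le> y" and "\<not> k x \<le> k y"
  then have "0 < (k x - k y) * (y - x)" by (cases "x = y") auto
  moreover have "u x + k x * (y - x) \<le> u y" "u y + k y * (x - y) \<le> u x"
    using subgradients_onD[OF sub] xy by auto
  ultimately show False by (simp add: algebra_simps)
qed

lemma subgradient_continuous_on:
  fixes u k :: "real \<Rightarrow> real"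
  assumes sub: "subgradients_on A u k"
    and B: "\<And>x. x \<in> A \<Longrightarrow> \<bar>k x\<bar> \<le> B"
  shows "continuous_on A u"
proof (rule lipschitz_on_continuous_on, rule lipschitz_onI)
  have Lip: "\<bar>u y - u x\<bar> \<le> \<bar>B\<bar> * \<bar>y - x\<bar>" if "x \<in> A" "y \<in> A" "x \<le> y" for x y
  proof -
    have "k x * (y - x) \<le> u y - u x" "u y - u x \<le> k y * (y - x)"
      using subgradients_onD[OF sub, of x y] subgradients_onD[OF sub, of y x] that
      by (auto simp: algebra_simps)
    moreover have "- \<bar>B\<bar> * (y - x) \<le> k x * (y - x)"
      using B[of x] that by (intro mult_right_mono) auto
    moreover have "k y * (y - x) \<le> \<bar>B\<bar> * (y - x)"
      using B[of y] that by (intro mult_right_mono) auto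
    ultimately show ?thesis using that by (simp add: abs_le_iff)
  qed
  fix x y assume "x \<in> A" "y \<in> A"
  then show "dist (u x) (u y) \<le> \<bar>B\<bar> * dist x y"
    using Lip[of x y] Lip[of y x] by (cases "x \<le> y") (auto simp: dist_real_def abs_minus_commute)
qed simp

lemma mono_on_threshold_eventually_constant:
  fixes k :: "real \<Rightarrow> real"
  assumes mono: "mono_on A k" and bdd: "bdd_below A" and x: "x \<in> A"
    and ne: "x \<noteq> Inf {z \<in> A. c \<le> k z}"
  shows "\<forall>\<^sub>F y in nhds x. y \<in> A \<longrightarrow> (c \<le> k y \<longleftrightarrow> c \<le> k x)"
proof -
  define L where "L = {z \<in> A. c \<le> k z}"
  have bddL: "bdd_below L" using bdd unfolding L_def by (rule bdd_below_mono) auto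
  consider "L = {}" | "L \<noteq> {}" "x < Inf L" | "L \<noteq> {}" "Inf L < x"
    using ne unfolding L_def by fastforce
  then show ?thesis
  proof cases
    case 1
    then show ?thesis using x by (auto simp: L_def)
  next
    case 2
    have below: "y \<in> A \<Longrightarrow> \<not> c \<le> k y" if "y < Inf L" for y
      using cInf_lower[OF _ bddL, of y] that by (auto simp: L_def)
    then show ?thesis
      using eventually_nhds_in_open[of "{..<Inf L}" x] 2 x by (auto elim!: eventually_mono)
  next
    case 3
    then obtain z where z: "z \<in> L" "z < x" using cInf_less_iff[OF _ bddL] 3 by auto
    have "c \<le> k y" if "y \<in> A" "z \<le> y" for y
      using mono_onD[OF mono, of z y] z that by (auto simp: L_def)
    then show ?thesis
      using eventually_nhds_in_open[of "{z<..}" x] z x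
      by (auto elim!: eventually_mono)
  qed
qed

lemma subgradient_has_real_derivative:
  fixes u k :: "real \<Rightarrow> real"
  assumes sub: "subgradients_on A u k"
    and x: "x \<in> A" and loc: "\<forall>\<^sub>F y in nhds x. y \<in> A \<and> k y = k x"
  shows "(u has_real_derivative k x) (at x)"
proof -
  have tangent: "\<forall>\<^sub>F y in nhds x. u x + k x * (y - x) = u y"
    using loc
  proof eventually_elim
    case (elim y)
    then show ?case
      using subgradients_onD[OF sub x, of y] subgradients_onD[OF sub _ x, of y]
      by (auto simp: algebra_simps)
  qed
  have "((\<lambda>y. u x + k x * (y - x)) has_real_derivative k x) (at x)"
    by (auto intro!: derivative_eq_intros)
  then show ?thesis using DERIV_cong_ev[OF refl tangent refl] by blast
qed

lemma subgradient_envelope_integral: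
  fixes u k :: "real \<Rightarrow> real"
  assumes sub: "subgradients_on {a..b} u k"
    and K: "finite K" "\<And>x. x \<in> {a..b} \<Longrightarrow> k x \<in> K"
    and k: "k \<in> borel_measurable borel" and t: "t \<in> {a..b}"
  shows "u b - u t = (LINT s:{t..b}|lborel. k s)"
proof -
  obtain B where B: "\<And>x. x \<in> {a..b} \<Longrightarrow> \<bar>k x\<bar> \<le> B"
    using K by (metis Max_ge finite_imageI image_eqI)
  \<comment> \<open>k is monotone with values in K, so away from its finitely many jump points E it is
    locally constant, and there u has derivative k\<close>
  define E where "E = (\<lambda>c. Inf {z \<in> {a..b}. c \<le> k z}) ` K"
  have deriv: "(u has_real_derivative k x) (at x)" if x: "x \<in> {t<..<b} - E" for x
  proof (rule subgradient_has_real_derivative[OF sub])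
    show "x \<in> {a..b}" using x t by auto
    have "\<forall>c\<in>K. \<forall>\<^sub>F y in nhds x. y \<in> {a..b} \<longrightarrow> (c \<le> k y \<longleftrightarrow> c \<le> k x)"
      using x t
      by (intro ballI mono_on_threshold_eventually_constant subgradient_mono_on[OF sub])
         (auto simp: E_def)
    then have "\<forall>\<^sub>F y in nhds x. \<forall>c\<in>K. y \<in> {a..b} \<longrightarrow> (c \<le> k y \<longleftrightarrow> c \<le> k x)"
      by (rule eventually_ball_finite[OF K(1)])
    moreover have "\<forall>\<^sub>F y in nhds x. y \<in> {a<..<b}"
      using x t by (intro eventually_nhds_in_open) auto
    ultimately show "\<forall>\<^sub>F y in nhds x. y \<in> {a..b} \<and> k y = k x"
    proof eventually_elim
      case (elim y)
      then have "k x \<le> k y" "k y \<le> k x"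
        using K(2)[of x] K(2)[of y] \<open>x \<in> {a..b}\<close> by auto
      then show ?case using elim by auto
    qed
  qed
  have "continuous_on {a..b} u" by (rule subgradient_continuous_on[OF sub B])
  then have "continuous_on {t..b} u" by (rule continuous_on_subset) (use t in auto)
  then have "(k has_integral (u b - u t)) {t..b}"
    using t deriv
    by (intro fundamental_theorem_of_calculus_interior_strong[of E])
       (auto simp: E_def K(1) has_real_derivative_iff_has_vector_derivative)
  moreover have "set_integrable lborel {t..b} k"
    using B t by (intro set_integrable_bounded_Icc[OF k, of _ _ B]) auto
  ultimately show ?thesis
    using set_borel_integral_eq_integral(2) integral_unique by metis
qed

lemma cdf_eq_integral_indicator:
  fixes f F :: "real \<Rightarrow> real"
  assumes F: "\<And>\<theta>. \<theta> \<in> {a..b} \<Longrightarrow> F \<theta> = (LINT x:{a..\<theta>}|lborel. f x)"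
  shows "(\<integral>\<theta>. indicator {\<theta>..b} s * (indicator {a..b} \<theta> * f \<theta>) \<partial>lborel) = indicator {a..b} s * F s"
proof (cases "s \<in> {a..b}")
  case True
  have "(\<integral>\<theta>. indicator {\<theta>..b} s * (indicator {a..b} \<theta> * f \<theta>) \<partial>lborel)
      = (\<integral>\<theta>. indicator {a..s} \<theta> * f \<theta> \<partial>lborel)"
    using True by (intro Bochner_Integration.integral_cong) (auto simp: indicator_def)
  then show ?thesis using F[OF True] True by (simp add: set_lebesgue_integral_def)
next
  case False
  then have "(\<lambda>\<theta>. indicator {\<theta>..b} s * (indicator {a..b} \<theta> * f \<theta>)) = (\<lambda>_. 0 :: real)"
    by (auto simp: indicator_def fun_eq_iff)
  then show ?thesis using False by simp
qed

lemma set_integrable_mult_cdf: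
  fixes f F g :: "real \<Rightarrow> real"
  assumes f: "set_integrable lborel {a..b} f"
    and F: "\<And>\<theta>. \<theta> \<in> {a..b} \<Longrightarrow> F \<theta> = (LINT x:{a..\<theta>}|lborel. f x)"
    and g: "g \<in> borel_measurable borel" and gB: "\<And>s. s \<in> {a..b} \<Longrightarrow> \<bar>g s\<bar> \<le> B"
  shows "set_integrable lborel {a..b} (\<lambda>s. g s * F s)"
proof -
  define f0 where "f0 \<theta> = indicator {a..b} \<theta> * f \<theta>" for \<theta>
  have f0: "integrable lborel f0" using f by (simp add: set_integrable_def f0_def[abs_def])
  have [measurable]: "f0 \<in> borel_measurable borel" using borel_measurable_integrable[OF f0] by simp
  have F0: "indicator {a..b} s * F s = (\<integral>\<theta>. indicator {\<theta>..b} s * f0 \<theta> \<partial>lborel)" for s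
    using cdf_eq_integral_indicator[where a=a and b=b, OF F] by (simp add: f0_def)
  have ind: "indicator {\<theta>..b} s = (if \<theta> \<le> s \<and> s \<le> b then 1 else (0::real))" for \<theta> s
    by (auto simp: indicator_def)
  have "(\<lambda>s. indicator {a..b} s * F s) \<in> borel_measurable borel"
    unfolding F0 unfolding ind by measurable
  then have Fm: "set_borel_measurable lborel {a..b} F"
    unfolding set_borel_measurable_def real_scaleR_def by simp
  have Fb: "\<bar>F s\<bar> \<le> (\<integral>\<theta>. \<bar>f0 \<theta>\<bar> \<partial>lborel)" if "s \<in> {a..b}" for s
  proof -
    have "\<bar>F s\<bar> \<le> (\<integral>\<theta>. norm (indicator {\<theta>..b} s * f0 \<theta>) \<partial>lborel)"
      using F0[of s] that integral_norm_bound[of lborel "\<lambda>\<theta>. indicator {\<theta>..b} s * f0 \<theta>"] by simp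
    also have "\<dots> \<le> (\<integral>\<theta>. \<bar>f0 \<theta>\<bar> \<partial>lborel)"
    proof (rule integral_mono)
      have "(\<lambda>\<theta>. indicator {\<theta>..b} s * f0 \<theta>) \<in> borel_measurable lborel"
        unfolding ind by measurable
      then show "integrable lborel (\<lambda>\<theta>. norm (indicator {\<theta>..b} s * f0 \<theta>))"
        by (intro integrable_norm Bochner_Integration.integrable_bound[OF f0])
           (auto simp: indicator_def)
    qed (use f0 in \<open>auto simp: indicator_def\<close>)
    finally show ?thesis .
  qed
  have "set_integrable lborel {a..b} (\<lambda>s. F s * g s)"
    by (rule set_integrable_mult_bounded[OF set_integrable_bounded_Icc[OF g gB] Fm Fb])
  then show ?thesis by (simp add: mult.commute)
qed

lemma integrable_pair_tail:
  fixes g k :: "real \<Rightarrow> real"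
  assumes g: "integrable lborel g" and supp: "\<And>\<theta>. g \<theta> \<noteq> 0 \<Longrightarrow> \<theta> \<in> {a..b}"
    and k: "k \<in> borel_measurable borel" and kB: "\<And>s. s \<in> {a..b} \<Longrightarrow> \<bar>k s\<bar> \<le> B"
  shows "integrable (lborel \<Otimes>\<^sub>M lborel) (\<lambda>(\<theta>, s). g \<theta> * (indicator {\<theta>..b} s * k s))"
proof -
  have [measurable]: "g \<in> borel_measurable borel" using borel_measurable_integrable[OF g] by simp
  note k[measurable]
  have ind: "indicator {\<theta>..b} s = (if \<theta> \<le> s \<and> s \<le> b then 1 else (0::real))" for \<theta> s
    by (auto simp: indicator_def)
  define G where "G = (\<lambda>(\<theta>, s). \<bar>g \<theta>\<bar> * (\<bar>B\<bar> * indicator {a..b} s))"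
  have Gm: "G \<in> borel_measurable (lborel \<Otimes>\<^sub>M lborel)"
    unfolding G_def by measurable
  have "integrable (lborel \<Otimes>\<^sub>M lborel) G"
  proof (rule lborel_pair.Fubini_integrable[OF Gm])
    have "(\<lambda>\<theta>. \<integral>s. norm (G (\<theta>, s)) \<partial>lborel) = (\<lambda>\<theta>. (\<bar>B\<bar> * measure lborel {a..b}) * \<bar>g \<theta>\<bar>)"
      by (simp add: G_def abs_mult fun_eq_iff)
    then show "integrable lborel (\<lambda>\<theta>. \<integral>s. norm (G (\<theta>, s)) \<partial>lborel)"
      using g by simp
    show "AE \<theta> in lborel. integrable lborel (\<lambda>s. G (\<theta>, s))"
      by (simp add: G_def integrable_indicator_iff emeasure_lborel_Icc_eq)
  qed
  then show ?thesis
  proof (rule Bochner_Integration.integrable_bound, unfold ind)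
    show "(\<lambda>(\<theta>, s). g \<theta> * ((if \<theta> \<le> s \<and> s \<le> b then 1 else 0) * k s))
        \<in> borel_measurable (lborel \<Otimes>\<^sub>M lborel)"
      by measurable
  next
    show "AE x in lborel \<Otimes>\<^sub>M lborel.
        norm ((\<lambda>(\<theta>, s). g \<theta> * ((if \<theta> \<le> s \<and> s \<le> b then 1 else 0) * k s)) x) \<le> norm (G x)"
    proof (rule AE_I2, clarify)
      fix \<theta> s :: real
      show "norm (g \<theta> * ((if \<theta> \<le> s \<and> s \<le> b then 1 else 0) * k s)) \<le> norm (G (\<theta>, s))"
      proof (cases "g \<theta> \<noteq> 0 \<and> \<theta> \<le> s \<and> s \<le> b")
        case True
        then have "s \<in> {a..b}" using supp[of \<theta>] by auto
        then show ?thesis using True kB[of s]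
          by (auto simp: G_def abs_mult intro!: mult_left_mono)
      qed (auto simp: G_def)
    qed
  qed
qed

lemma set_integral_tail_swap:
  fixes f F k :: "real \<Rightarrow> real"
  assumes f: "set_integrable lborel {a..b} f"
    and F: "\<And>\<theta>. \<theta> \<in> {a..b} \<Longrightarrow> F \<theta> = (LINT x:{a..\<theta>}|lborel. f x)"
    and k: "k \<in> borel_measurable borel" and kB: "\<And>s. s \<in> {a..b} \<Longrightarrow> \<bar>k s\<bar> \<le> B"
  shows "(LINT \<theta>:{a..b}|lborel. f \<theta> * (LINT s:{\<theta>..b}|lborel. k s))
       = (LINT s:{a..b}|lborel. k s * F s)"
proof -
  define f0 where "f0 \<theta> = indicator {a..b} \<theta> * f \<theta>" for \<theta>
  have f0: "integrable lborel f0" using f by (simp add: set_integrable_def f0_def[abs_def])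
  define H where "H \<theta> s = f0 \<theta> * (indicator {\<theta>..b} s * k s)" for \<theta> s
  have "integrable (lborel \<Otimes>\<^sub>M lborel) (\<lambda>(\<theta>, s). H \<theta> s)"
    unfolding H_def by (rule integrable_pair_tail[OF f0 _ k kB]) (auto simp: f0_def indicator_def)
  then have "(\<integral>s. (\<integral>\<theta>. H \<theta> s \<partial>lborel) \<partial>lborel) = (\<integral>\<theta>. (\<integral>s. H \<theta> s \<partial>lborel) \<partial>lborel)"
    by (rule lborel_pair.Fubini_integral)
  moreover have "(\<integral>\<theta>. H \<theta> s \<partial>lborel) = indicator {a..b} s * (k s * F s)" for s
  proof -
    have "(\<integral>\<theta>. H \<theta> s \<partial>lborel)
        = k s * (\<integral>\<theta>. indicator {\<theta>..b} s * (indicator {a..b} \<theta> * f \<theta>) \<partial>lborel)"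
      unfolding integral_mult_right_zero[symmetric] H_def f0_def
      by (rule Bochner_Integration.integral_cong) (simp_all add: ac_simps)
    also have "\<dots> = k s * (indicator {a..b} s * F s)"
      using cdf_eq_integral_indicator[where a=a and b=b, OF F, of s] by simp
    finally show ?thesis by (simp add: ac_simps)
  qed
  moreover have "(\<integral>s. H \<theta> s \<partial>lborel) = indicator {a..b} \<theta> * (f \<theta> * (LINT s:{\<theta>..b}|lborel. k s))" for \<theta>
    unfolding H_def integral_mult_right_zero by (simp add: f0_def set_lebesgue_integral_def)
  ultimately show ?thesis by (simp add: set_lebesgue_integral_def)
qed

lemma set_integrable_subgradient_mult:
  fixes u k f :: "real \<Rightarrow> real"
  assumes sub: "subgradients_on {a..b} u k"
    and B: "\<And>x. x \<in> {a..b} \<Longrightarrow> \<bar>k x\<bar> \<le> B" and f: "set_integrable lborel {a..b} f"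
  shows "set_integrable lborel {a..b} (\<lambda>\<theta>. u \<theta> * f \<theta>)"
proof -
  have cont: "continuous_on {a..b} u" by (rule subgradient_continuous_on[OF sub B])
  obtain C where C: "\<And>x. x \<in> {a..b} \<Longrightarrow> \<bar>u x\<bar> \<le> C"
    using compact_imp_bounded[OF compact_continuous_image[OF cont compact_Icc]]
    by (fastforce simp: bounded_iff)
  have "set_borel_measurable lborel {a..b} u"
    using borel_measurable_continuous_on_indicator[OF _ cont] by (simp add: set_borel_measurable_def)
  then show ?thesis by (rule set_integrable_mult_bounded[OF f _ C])
qed

lemma subgradient_expectation_by_parts:
  fixes u k f F :: "real \<Rightarrow> real"
  assumes sub: "subgradients_on {a..b} u k"
    and K: "finite K" "\<And>x. x \<in> {a..b} \<Longrightarrow> k x \<in> K" and k: "k \<in> borel_measurable borel"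
    and f: "set_integrable lborel {a..b} f"
    and F: "\<And>\<theta>. \<theta> \<in> {a..b} \<Longrightarrow> F \<theta> = (LINT x:{a..\<theta>}|lborel. f x)"
    and ab: "a \<le> b" and mass: "F b = 1"
  shows "(LINT \<theta>:{a..b}|lborel. u \<theta> * f \<theta>) = u b - (LINT s:{a..b}|lborel. k s * F s)"
proof -
  obtain B where B: "\<And>x. x \<in> {a..b} \<Longrightarrow> \<bar>k x\<bar> \<le> B"
    using K by (metis Max_ge finite_imageI image_eqI)
  have uf: "set_integrable lborel {a..b} (\<lambda>\<theta>. u \<theta> * f \<theta>)"
    by (rule set_integrable_subgradient_mult[OF sub B f])
  have "(LINT \<theta>:{a..b}|lborel. f \<theta> * (LINT s:{\<theta>..b}|lborel. k s))
      = (LINT \<theta>:{a..b}|lborel. u b * f \<theta> - u \<theta> * f \<theta>)"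
    using subgradient_envelope_integral[OF sub K k]
    by (intro set_lebesgue_integral_cong) (auto simp: algebra_simps)
  also have "\<dots> = u b - (LINT \<theta>:{a..b}|lborel. u \<theta> * f \<theta>)"
    using f uf mass F[of b] ab by simp
  finally show ?thesis
    using set_integral_tail_swap[where a=a and b=b, OF f F k B] by simp
qed

lemma payoff_outcome:
  "payoff S (outcome_Q a1 s2) (outcome_T pg p1 p2 a1 s2) \<theta>
     = pay1 S pg p1 \<theta> (a1 \<theta>) + pay2 S p2 \<theta> (a1 \<theta>) (s2 \<theta> (a1 \<theta>))"
  by (cases "a1 \<theta>"; cases "s2 \<theta> (a1 \<theta>)")
     (auto simp: payoff_def outcome_Q_def outcome_T_def pay1_def pay2_def price1_def algebra_simps)

lemma outcome_Q_cases: "real (outcome_Q a1 s2 \<theta>) \<in> {0, 1, 2}"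
  by (auto simp: outcome_Q_def)

lemma borel_measurable_strategy_outcome:
  fixes \<psi> :: "act1 \<Rightarrow> bool \<Rightarrow> real \<Rightarrow> real"
  assumes a1: "\<And>h. {\<theta>. a1 \<theta> = h} \<in> sets borel" and s2: "\<And>h. {\<theta>. s2 \<theta> h} \<in> sets borel"
    and \<psi>: "\<And>a b. \<psi> a b \<in> borel_measurable borel"
  shows "(\<lambda>\<theta>. \<psi> (a1 \<theta>) (s2 \<theta> (a1 \<theta>)) \<theta>) \<in> borel_measurable borel"
proof -
  have "(\<lambda>\<theta>. \<psi> (a1 \<theta>) (s2 \<theta> (a1 \<theta>)) \<theta>) = (\<lambda>\<theta>. \<Sum>a\<in>{NoSale, SellGov, SellMkt}. \<Sum>b\<in>{True, False}.
      indicator ({\<theta>. a1 \<theta> = a} \<inter> {\<theta>. s2 \<theta> a = b}) \<theta> * \<psi> a b \<theta>)"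
  proof
    fix \<theta> show "\<psi> (a1 \<theta>) (s2 \<theta> (a1 \<theta>)) \<theta> = (\<Sum>a\<in>{NoSale, SellGov, SellMkt}. \<Sum>b\<in>{True, False}.
      indicator ({\<theta>. a1 \<theta> = a} \<inter> {\<theta>. s2 \<theta> a = b}) \<theta> * \<psi> a b \<theta>)"
      by (cases "a1 \<theta>"; cases "s2 \<theta> (a1 \<theta>)") (auto simp: indicator_def)
  qed
  moreover have "{\<theta>. s2 \<theta> a = b} \<in> sets borel" for a b
    using s2[of a] borel_comp[OF s2[of a]] by (cases b) (simp_all add: Collect_neg_eq)
  ultimately show ?thesis
    by (simp only:) (intro borel_measurable_sum borel_measurable_times borel_measurable_indicator
        \<psi> sets.Int a1)
qed

lemma type_distribution_cdf:
  assumes "type_distribution F f"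
  shows "\<And>\<theta>. \<theta> \<in> {0..1} \<Longrightarrow> F \<theta> = (LINT x:{0..\<theta>}|lborel. f x)" and "F 1 = 1"
  using assms unfolding type_distribution_def by auto

lemma type_distribution_mean:
  assumes "type_distribution F f"
  shows "(LINT \<theta>:{0..1}|lborel. \<theta> * f \<theta>) = 1 - (LINT s:{0..1}|lborel. F s)"
  using assms type_distribution_cdf[OF assms]
  by (subst subgradient_expectation_by_parts[where k="\<lambda>_. 1" and K="{1}"])
     (auto simp: type_distribution_def subgradients_on_def)

locale bailout_equilibrium =
  fixes I S pg p1 :: real and p2 :: "act1 \<Rightarrow> real" and a1 :: "real \<Rightarrow> act1"
    and s2 :: "real \<Rightarrow> act1 \<Rightarrow> bool" and F f :: "real \<Rightarrow> real"
  assumes distribution: "type_distribution F f"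
    and equilibrium: "equilibrium I S pg f p1 p2 a1 s2"
begin

abbreviation Q :: "real \<Rightarrow> nat" where "Q \<equiv> outcome_Q a1 s2"

abbreviation u :: "real \<Rightarrow> real" where "u \<equiv> payoff S Q (outcome_T pg p1 p2 a1 s2)"

lemma payoff_subgradients: "subgradients_on {0..1} u (\<lambda>\<theta>. 2 - real (Q \<theta>))"
proof (rule subgradients_onI)
  fix x y :: real assume x: "x \<in> {0..1}" and y: "y \<in> {0..1}"
  define a where "a = a1 x"
  define b where "b = s2 x a"
  have f1: "feasible1 I pg p1 a" and f2: "feasible2 I p2 a b"
    using equilibrium x unfolding equilibrium_def a_def b_def by auto
  have "pay2 S p2 y a b \<le> pay2 S p2 y a (s2 y a)"
    using equilibrium y f2 unfolding equilibrium_def by blast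
  moreover have "pay1 S pg p1 y a + pay2 S p2 y a (s2 y a) \<le> u y"
    using equilibrium y f1 unfolding equilibrium_def payoff_outcome by blast
  moreover have "pay1 S pg p1 y a + pay2 S p2 y a b = u x + (2 - real (Q x)) * (y - x)"
    unfolding payoff_outcome outcome_Q_def a_def[symmetric] b_def[symmetric]
    by (cases "a = NoSale"; cases b) (auto simp: pay1_def pay2_def algebra_simps)
  ultimately show "u x + (2 - real (Q x)) * (y - x) \<le> u y" by linarith
qed

lemma payoff_ge_autarky:
  assumes "\<theta> \<in> {0..1}"
  shows "2 * \<theta> \<le> u \<theta>"
proof -
  have "feasible1 I pg p1 NoSale" "feasible2 I p2 NoSale False"
    by (auto simp: feasible1_def feasible2_def)
  then have "pay2 S p2 \<theta> NoSale False \<le> pay2 S p2 \<theta> NoSale (s2 \<theta> NoSale)"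
    and "pay1 S pg p1 \<theta> NoSale + pay2 S p2 \<theta> NoSale (s2 \<theta> NoSale) \<le> u \<theta>"
    using equilibrium assms unfolding equilibrium_def payoff_outcome by blast+
  then show ?thesis by (simp add: pay1_def pay2_def)
qed

lemma sets_strategy:
  "{\<theta>. a1 \<theta> = h} \<in> sets borel" "{\<theta>. s2 \<theta> h} \<in> sets borel"
  using equilibrium unfolding equilibrium_def by auto

lemma borel_measurable_Q: "(\<lambda>\<theta>. real (Q \<theta>)) \<in> borel_measurable borel"
proof -
  have "(\<lambda>\<theta>. (\<lambda>a b (_::real). (if a = NoSale then 0 else 1) + (if b then 1 else 0 :: real))
      (a1 \<theta>) (s2 \<theta> (a1 \<theta>)) \<theta>) \<in> borel_measurable borel"
    by (rule borel_measurable_strategy_outcome[OF sets_strategy]) simp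
  moreover have "real (Q \<theta>) = (if a1 \<theta> = NoSale then 0 else 1) + (if s2 \<theta> (a1 \<theta>) then 1 else 0)" for \<theta>
    by (simp add: outcome_Q_def)
  ultimately show ?thesis by simp
qed

lemma set_integrable_density: "set_integrable lborel {0..1} f"
  using distribution unfolding type_distribution_def by blast

lemma set_integrable_price_gap:
  assumes "A \<in> sets borel" "A \<subseteq> {0..1}"
  shows "integrable lborel (\<lambda>\<theta>. indicator A \<theta> * ((c - \<theta>) * f \<theta>))"
proof -
  have "set_integrable lborel {0..1} (\<lambda>\<theta>. (c - \<theta>) * f \<theta>)"
    by (rule set_integrable_mult_bounded[OF set_integrable_density, where B="\<bar>c\<bar> + 1"])
       (auto simp: set_borel_measurable_def)
  then have "set_integrable lborel A (\<lambda>\<theta>. (c - \<theta>) * f \<theta>)"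
    by (rule set_integrable_subset) (use assms in auto)
  then show ?thesis by (simp add: set_integrable_def)
qed

lemma government_cost:
  "(LINT \<theta>:gov_set a1|lborel. (pg - \<theta>) * f \<theta>)
     = (LINT \<theta>:{0..1}|lborel. (u \<theta> - 2 * \<theta> - S * real (Q \<theta>)) * f \<theta>)"
proof -
  define gap where "gap A c \<theta> = indicator A \<theta> * ((c - \<theta>) * f \<theta>)" for A c \<theta>
  define Sale1 where "Sale1 = {\<theta> \<in> {0..1}. a1 \<theta> = SellMkt}"
  define Sale2 where "Sale2 h = {\<theta> \<in> {0..1}. a1 \<theta> = h \<and> s2 \<theta> h}" for h
  have "gov_set a1 = {0..1} \<inter> {\<theta>. a1 \<theta> = SellGov}" "Sale1 = {0..1} \<inter> {\<theta>. a1 \<theta> = SellMkt}"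
    "Sale2 h = {0..1} \<inter> {\<theta>. a1 \<theta> = h} \<inter> {\<theta>. s2 \<theta> h}" for h
    by (auto simp: gov_set_def Sale1_def Sale2_def)
  then have sets: "gov_set a1 \<in> sets borel" "Sale1 \<in> sets borel" "Sale2 h \<in> sets borel" for h
    by (auto intro!: sets.Int sets_strategy)
  have int: "integrable lborel (gap (gov_set a1) c)" "integrable lborel (gap Sale1 c)"
    "integrable lborel (gap (Sale2 h) c)" for c h
    using sets unfolding gap_def
    by (auto intro!: set_integrable_price_gap simp: gov_set_def Sale1_def Sale2_def)
  have neg: "(\<integral>\<theta>. gap A c \<theta> \<partial>lborel) = - (LINT \<theta>:A|lborel. (\<theta> - c) * f \<theta>)" for A c
    unfolding gap_def set_lebesgue_integral_def integral_minus[symmetric]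
    by (rule Bochner_Integration.integral_cong) (simp_all add: algebra_simps)
  have break_even: "(\<integral>\<theta>. gap Sale1 p1 \<theta> \<partial>lborel) = 0" "(\<integral>\<theta>. gap (Sale2 h) (p2 h) \<theta> \<partial>lborel) = 0" for h
    using equilibrium unfolding equilibrium_def neg Sale1_def Sale2_def by auto
  \<comment> \<open>the surplus u - 2 \<theta> - S Q of a type is the sum of its gains price - \<theta> over the
    units it sells\<close>
  have "indicator {0..1} \<theta> * ((u \<theta> - 2 * \<theta> - S * real (Q \<theta>)) * f \<theta>)
      = gap (gov_set a1) pg \<theta> + gap Sale1 p1 \<theta> + gap (Sale2 NoSale) (p2 NoSale) \<theta>
        + gap (Sale2 SellGov) (p2 SellGov) \<theta> + gap (Sale2 SellMkt) (p2 SellMkt) \<theta>" for \<theta>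
    by (cases "a1 \<theta>"; cases "s2 \<theta> (a1 \<theta>)")
       (auto simp: gap_def Sale1_def Sale2_def gov_set_def payoff_outcome outcome_Q_def indicator_def
          pay1_def pay2_def price1_def algebra_simps)
  then have "(LINT \<theta>:{0..1}|lborel. (u \<theta> - 2 * \<theta> - S * real (Q \<theta>)) * f \<theta>)
      = (\<integral>\<theta>. gap (gov_set a1) pg \<theta> \<partial>lborel)"
    unfolding set_lebesgue_integral_def using int break_even by simp
  then show ?thesis by (simp add: gap_def set_lebesgue_integral_def)
qed

lemma expected_payoff:
  "(LINT \<theta>:{0..1}|lborel. u \<theta> * f \<theta>) = u 1 - (LINT s:{0..1}|lborel. (2 - real (Q s)) * F s)"
proof (rule subgradient_expectation_by_parts[OF payoff_subgradients, where K="{0, 1, 2}"])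
  show "\<And>x. 2 - real (Q x) \<in> {0, 1, 2}"
    using outcome_Q_cases by fastforce
  show "(\<lambda>s. 2 - real (Q s)) \<in> borel_measurable borel"
    using borel_measurable_Q by simp
qed (use set_integrable_density type_distribution_cdf[OF distribution] in auto)

lemma outcome_Q_abs_le: "\<bar>real (Q \<theta>)\<bar> \<le> 2" "\<bar>2 - real (Q \<theta>)\<bar> \<le> 2"
  using outcome_Q_cases[of a1 s2 \<theta>] by auto

lemma set_integrable_quantity_density: "set_integrable lborel {0..1} (\<lambda>\<theta>. real (Q \<theta>) * f \<theta>)"
  using borel_measurable_Q
  by (intro set_integrable_mult_bounded[OF set_integrable_density _ outcome_Q_abs_le(1)])
     (simp add: set_borel_measurable_def)

lemma set_integrable_quantity_cdf: "set_integrable lborel {0..1} (\<lambda>s. real (Q s) * F s)"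
  by (rule set_integrable_mult_cdf[OF set_integrable_density type_distribution_cdf(1)[OF distribution]
        borel_measurable_Q outcome_Q_abs_le(1)])

lemma virtual_cost_eq:
  assumes "\<theta> \<in> {0..1}"
  shows "((F \<theta> / f \<theta> - S) * real (Q \<theta>) + u 1 - 2) * f \<theta>
    = real (Q \<theta>) * F \<theta> - S * (real (Q \<theta>) * f \<theta>) + (u 1 - 2) * f \<theta>"
proof -
  have "f \<theta> \<noteq> 0" using distribution assms unfolding type_distribution_def by fastforce
  then show ?thesis by (simp add: field_simps)
qed

lemma set_integrable_virtual_cost:
  "set_integrable lborel {0..1} (\<lambda>\<theta>. ((F \<theta> / f \<theta> - S) * real (Q \<theta>) + u 1 - 2) * f \<theta>)"
  using set_integrable_quantity_cdf set_integrable_quantity_density set_integrable_density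
  by (subst set_integrable_cong[OF refl refl virtual_cost_eq]) auto

lemma government_cost_virtual:
  "(LINT \<theta>:gov_set a1|lborel. (pg - \<theta>) * f \<theta>)
     = (LINT \<theta>:{0..1}|lborel. ((F \<theta> / f \<theta> - S) * real (Q \<theta>) + u 1 - 2) * f \<theta>)"
proof -
  note f = set_integrable_density and cdf = type_distribution_cdf[OF distribution]
    and iQf = set_integrable_quantity_density and iQF = set_integrable_quantity_cdf
  have i\<theta>f: "set_integrable lborel {0..1} (\<lambda>\<theta>. \<theta> * f \<theta>)"
    by (rule set_integrable_mult_bounded[OF f, where B=1]) (auto simp: set_borel_measurable_def)
  have iuf: "set_integrable lborel {0..1} (\<lambda>\<theta>. u \<theta> * f \<theta>)"
    by (rule set_integrable_subgradient_mult[OF payoff_subgradients outcome_Q_abs_le(2) f])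
  have iF: "set_integrable lborel {0..1} (\<lambda>s. 1 * F s)"
    by (rule set_integrable_mult_cdf[OF f cdf(1), where B=1]) auto
  have "(LINT \<theta>:{0..1}|lborel. ((F \<theta> / f \<theta> - S) * real (Q \<theta>) + u 1 - 2) * f \<theta>)
      = (LINT \<theta>:{0..1}|lborel. real (Q \<theta>) * F \<theta> - S * (real (Q \<theta>) * f \<theta>) + (u 1 - 2) * f \<theta>)"
    using virtual_cost_eq by (intro set_lebesgue_integral_cong) auto
  also have "\<dots> = (LINT s:{0..1}|lborel. real (Q s) * F s) - S * (LINT \<theta>:{0..1}|lborel. real (Q \<theta>) * f \<theta>)
      + (u 1 - 2)"
    using iQF iQf f cdf by simp
  also have "\<dots> = (LINT \<theta>:{0..1}|lborel. u \<theta> * f \<theta>) - 2 * (LINT \<theta>:{0..1}|lborel. \<theta> * f \<theta>)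
      - S * (LINT \<theta>:{0..1}|lborel. real (Q \<theta>) * f \<theta>)"
  proof -
    have "(LINT s:{0..1}|lborel. (2 - real (Q s)) * F s)
        = 2 * (LINT s:{0..1}|lborel. F s) - (LINT s:{0..1}|lborel. real (Q s) * F s)"
      using iF iQF by (simp add: left_diff_distrib)
    then show ?thesis using expected_payoff type_distribution_mean[OF distribution] by simp
  qed
  also have "\<dots> = (LINT \<theta>:{0..1}|lborel. (u \<theta> - 2 * \<theta> - S * real (Q \<theta>)) * f \<theta>)"
    using iuf i\<theta>f iQf by (simp add: left_diff_distrib mult.assoc)
  finally show ?thesis by (simp add: government_cost)
qed

lemma realized_surplus:
  "(LINT \<theta>:{0..1}|lborel. (u \<theta> + \<theta> * real (Q \<theta>) - outcome_T pg p1 p2 a1 s2 \<theta>) * f \<theta>)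
     = (LINT \<theta>:{0..1}|lborel. (2 * \<theta> + S * real (Q \<theta>)) * f \<theta>)"
  by (intro set_lebesgue_integral_cong) (auto simp: payoff_def algebra_simps)

lemma set_integrable_surplus:
  "set_integrable lborel {0..1} (\<lambda>\<theta>. (2 * \<theta> + S * real (Q \<theta>)) * f \<theta>)"
proof -
  have "\<bar>2 * \<theta> + S * real (Q \<theta>)\<bar> \<le> 2 + 2 * \<bar>S\<bar>" if "\<theta> \<in> {0..1}" for \<theta>
    using that outcome_Q_cases[of a1 s2 \<theta>] by (auto simp: abs_if split: if_splits)
  then show ?thesis
    using borel_measurable_Q
    by (intro set_integrable_mult_bounded[OF set_integrable_density]) (auto simp: set_borel_measurable_def)
qed

end

theorem lemma2:
  fixes F f :: "real \<Rightarrow> real" and I S pg lam p1 :: real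
    and p2 :: "act1 \<Rightarrow> real" and a1 :: "real \<Rightarrow> act1" and s2 :: "real \<Rightarrow> act1 \<Rightarrow> bool"
  assumes dist: "type_distribution F f"
    and I_pos: "I > 0" and S_pos: "S > 0" and lam: "lam \<ge> 0"
    and eq: "equilibrium I S pg f p1 p2 a1 s2"
  defines "Q \<equiv> outcome_Q a1 s2"
    and "T \<equiv> outcome_T pg p1 p2 a1 s2"
    and "ubar \<equiv> payoff S (outcome_Q a1 s2) (outcome_T pg p1 p2 a1 s2) 1"
  shows "ubar \<ge> 2 \<and>
         welfare lam S pg f Q T (gov_set a1) =
           set_lebesgue_integral lborel {0..1}
             (\<lambda>\<theta>. (2 * \<theta> + S * real (Q \<theta>)
                    - lam * ((F \<theta> / f \<theta> - S) * real (Q \<theta>) + ubar - 2)) * f \<theta>)"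
proof
  interpret bailout_equilibrium I S pg p1 p2 a1 s2 F f
    using dist eq by unfold_locales
  show "ubar \<ge> 2"
    using payoff_ge_autarky[of 1] by (simp add: ubar_def)
  have "welfare lam S pg f Q T (gov_set a1)
      = (LINT \<theta>:{0..1}|lborel. (2 * \<theta> + S * real (Q \<theta>)) * f \<theta>)
        - lam * (LINT \<theta>:{0..1}|lborel. ((F \<theta> / f \<theta> - S) * real (Q \<theta>) + ubar - 2) * f \<theta>)"
    unfolding welfare_def Q_def T_def ubar_def realized_surplus government_cost_virtual ..
  also have "\<dots> = (LINT \<theta>:{0..1}|lborel. (2 * \<theta> + S * real (Q \<theta>)
                    - lam * ((F \<theta> / f \<theta> - S) * real (Q \<theta>) + ubar - 2)) * f \<theta>)"
    using set_integrable_surplus set_integrable_virtual_cost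
    unfolding Q_def ubar_def by (simp add: left_diff_distrib mult.assoc)
  finally show "welfare lam S pg f Q T (gov_set a1) = \<dots>" .
qed

end
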